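(* Let $\mu>0$ and $k>0$. The function $T_p:(0,x_p)\to(0,+\infty)$ defined in the context is continuous, strictly increasing, and satisfies: (i) $\displaystyle\lim_{x\to0^+}T_p(x)=\frac{k}{\mu}$; (ii) if $x_p<1$, then $\displaystyle\lim_{x\to x_p^-}T_p(x)=+\infty$.
   Context: Let $G(u)=u^3/3-u^4/4$ for $u\in[0,1]$ (a primitive of $g(u)=u^2(1-u)$). Let $y(x)=-kx^2$ for $x\in(0,1)$. If $k^2\le\mu/6$ set $x_p=1$; if $k^2>\mu/6$ let $x_p\in(0,1)$ be the unique $x\in(0,1)$ with $y(x)^2=2\mu G(x)$ (explicitly $x_p=4\mu/(6k^2+3\mu)$). For $x\in(0,x_p)$ one has $y(x)^2<2\mu G(x)$, and $m(x)$ denotes the unique number in $(0,x)$ with $2\mu G(m(x))=2\mu G(x)-y(x)^2$ (the abscissa where the level line $v^2-2\mu G(u)=\mathrm{const}$ through $(x,y(x))$ meets the $u$-axis). Define $$T_p(x)=\int_{m(x)}^{x}\frac{du}{\sqrt{y(x)^2+2\mu(G(u)-G(x))}},\qquad x\in(0,x_p),$$ i.e. the time for a solution of $u''=\mu g(u)$ starting at $(x,y(x))$ to reach the $u$-axis. *)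

theory Defs
  imports "HOL-Analysis.Analysis"
begin

definition G :: "real \<Rightarrow> real" where
  "G u = u^3/3 - u^4/4"

definition yk :: "real \<Rightarrow> real \<Rightarrow> real" where
  "yk k x = - k * x^2"

definition xp :: "real \<Rightarrow> real \<Rightarrow> real" where
  "xp mu k = (if k^2 \<le> mu/6 then 1 else 4*mu/(6*k^2 + 3*mu))"

definition mx :: "real \<Rightarrow> real \<Rightarrow> real \<Rightarrow> real" where
  "mx mu k x = (THE m. 0 < m \<and> m < x \<and> 2*mu*G m = 2*mu*G x - (yk k x)^2)"

definition Tp_integrand :: "real \<Rightarrow> real \<Rightarrow> real \<Rightarrow> real \<Rightarrow> real" where
  "Tp_integrand mu k x u = 1 / sqrt ((yk k x)^2 + 2*mu*(G u - G x))"

definition Tp :: "real \<Rightarrow> real \<Rightarrow> real \<Rightarrow> real" where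
  "Tp mu k x = integral {mx mu k x..x} (Tp_integrand mu k x)"

end

(* Along the level line v^2 - 2 mu G u = const through (x, y x), which meets the u-axis at m x,
   the speed at abscissa u is sqrt (y(x)^2 + 2 mu (G u - G x)).  Parametrising the arc by the
   fraction s of the final speed |y x| = k x^2, i.e. by the point V(x, s) = level_point mu k x s
   with G (V(x, s)) = G x - (1 - s^2) y(x)^2 / (2 mu), turns T_p into the proper integral
   T_p x = int_0^1 k x^2 / (mu g (V(x, s))) ds of a continuous density.  The density is strictly
   increasing in x (the sign of its x-derivative reduces to a polynomial inequality) and lies
   between k/mu and (k/mu) (1 + O(x)).  If x_p < 1, the level line through (x_p, y x_p) passes
   through the origin, so m x -> 0 as x -> x_p; since the speed at u is at most sqrt (2 mu u^3/3),
   T_p x >= c (m(x)^(-1/2) - x^(-1/2)) -> infinity. *)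

theory Submission
  imports Defs
begin

lemma strict_mono_on_Icc_image:
  fixes f :: "real \<Rightarrow> real"
  assumes "a \<le> b" "continuous_on {a..b} f" "strict_mono_on {a..b} f"
  shows "f ` {a..b} = {f a..f b}"
proof
  show "f ` {a..b} \<subseteq> {f a..f b}"
    using strict_mono_on_leD[OF assms(3)] assms(1) by auto
  show "{f a..f b} \<subseteq> f ` {a..b}"
    using IVT'[of f a _ b] assms(1,2) by force
qed

lemma the_inv_into_Icc_has_real_derivative:
  fixes f :: "real \<Rightarrow> real"
  assumes "a \<le> b" and cont: "continuous_on {a..b} f" and mono: "strict_mono_on {a..b} f"
    and y: "f a < y" "y < f b"
    and der: "(f has_real_derivative D) (at (the_inv_into {a..b} f y))" and "D \<noteq> 0"
  shows "(the_inv_into {a..b} f has_real_derivative inverse D) (at y)"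
proof (rule DERIV_inverse_function[where g = "the_inv_into {a..b} f", OF der \<open>D \<noteq> 0\<close> y])
  have inj: "inj_on f {a..b}"
    by (rule strict_mono_on_imp_inj_on[OF mono])
  have img: "f ` {a..b} = {f a..f b}"
    by (rule strict_mono_on_Icc_image[OF assms(1-3)])
  show "f (the_inv_into {a..b} f z) = z" if "f a < z" "z < f b" for z
    using f_the_inv_into_f[OF inj] img that by auto
  show "isCont (the_inv_into {a..b} f) y"
    using continuous_on_inv_into[OF cont compact_Icc inj] y
    by (intro continuous_on_interior[of "{f a..f b}"]) (auto simp: img)
qed

definition g :: "real \<Rightarrow> real" where
  "g u = u^2 * (1 - u)"

lemma G_has_real_derivative: "(G has_real_derivative g u) (at u)"
  unfolding G_def g_def
  by (auto intro!: derivative_eq_intros simp: power2_eq_square power3_eq_cube algebra_simps)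

lemma g_has_real_derivative: "(g has_real_derivative 2*u - 3*u^2) (at u)"
  unfolding g_def by (auto intro!: derivative_eq_intros simp: algebra_simps power2_eq_square)

lemma continuous_on_G: "continuous_on S G"
  unfolding G_def by (intro continuous_intros) auto

lemma g_pos: "0 < u \<Longrightarrow> u < 1 \<Longrightarrow> 0 < g u"
  unfolding g_def by simp

lemma G_0 [simp]: "G 0 = 0" and G_1 [simp]: "G 1 = 1/12"
  by (simp_all add: G_def)

lemma strict_mono_on_G: "strict_mono_on {0..1} G"
proof (rule strict_mono_onI)
  fix a b :: real assume "a \<in> {0..1}" "b \<in> {0..1}" "a < b"
  show "G a < G b"
  proof (rule DERIV_pos_imp_increasing_open[OF \<open>a < b\<close> _ continuous_on_G])
    fix x assume "a < x" "x < b"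
    then show "\<exists>D. (G has_real_derivative D) (at x) \<and> 0 < D"
      using \<open>a \<in> {0..1}\<close> \<open>b \<in> {0..1}\<close> G_has_real_derivative g_pos by force
  qed
qed

lemmas G_less_iff = strict_mono_on_less[OF strict_mono_on_G]
lemmas G_le_iff = strict_mono_on_less_eq[OF strict_mono_on_G]
lemmas G_eq_iff = strict_mono_on_eq[OF strict_mono_on_G]

lemma G_ge_cube: "0 \<le> u \<Longrightarrow> u \<le> 1 \<Longrightarrow> u^3/12 \<le> G u"
  unfolding G_def using power_decreasing[of 3 4 u] by simp

lemma G_le_cube: "0 \<le> u \<Longrightarrow> G u \<le> u^3/3"
  unfolding G_def by simp

definition G_inv :: "real \<Rightarrow> real" where
  "G_inv = the_inv_into {0..1} G"

lemma G_image: "G ` {0..1} = {0..1/12}"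
  using strict_mono_on_Icc_image[OF _ continuous_on_G strict_mono_on_G] by simp

lemma G_inv_mem: "z \<in> {0..1/12} \<Longrightarrow> G_inv z \<in> {0..1}"
  unfolding G_inv_def
  by (rule the_inv_into_into) (auto simp: G_image strict_mono_on_imp_inj_on[OF strict_mono_on_G])

lemma G_G_inv: "z \<in> {0..1/12} \<Longrightarrow> G (G_inv z) = z"
  unfolding G_inv_def
  by (rule f_the_inv_into_f) (auto simp: G_image strict_mono_on_imp_inj_on[OF strict_mono_on_G])

lemma G_inv_mem_open: "z \<in> {0<..<1/12} \<Longrightarrow> G_inv z \<in> {0<..<1}"
  using G_inv_mem[of z] G_G_inv[of z] by (force simp: less_le)

lemma continuous_on_G_inv: "continuous_on {0..1/12} G_inv"
  using continuous_on_inv_into[OF continuous_on_G compact_Icc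
      strict_mono_on_imp_inj_on[OF strict_mono_on_G]]
  by (simp add: G_inv_def G_image)

lemma G_inv_has_real_derivative:
  assumes "z \<in> {0<..<1/12}"
  shows "(G_inv has_real_derivative inverse (g (G_inv z))) (at z)"
proof -
  have "0 < g (G_inv z)"
    using G_inv_mem_open[OF assms] g_pos by auto
  then show ?thesis
    unfolding G_inv_def using assms
    by (intro the_inv_into_Icc_has_real_derivative continuous_on_G strict_mono_on_G
        G_has_real_derivative) (auto simp: G_inv_def)
qed

(* The sign of the x-derivative of Tp_density, see Tp_density_has_real_derivative. *)
lemma density_derivative_numerator_pos:
  fixes w x :: real
  assumes "0 < w" "w \<le> x" "x < 1"
  shows "(2*w - 3*w^2) * (4 * G w - x^3/3) < 2 * (g w)^2"
proof (cases "w \<le> 2/3")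
  case True
  have "0 \<le> 2*w - 3*w^2"
    using True assms by (simp add: power2_eq_square algebra_simps)
  moreover have "w^3 \<le> x^3"
    using assms by (simp add: power_mono)
  then have "4 * G w - x^3/3 \<le> w^3 - w^4"
    by (simp add: G_def)
  ultimately have "(2*w - 3*w^2) * (4 * G w - x^3/3) \<le> (2*w - 3*w^2) * (w^3 - w^4)"
    by (rule mult_left_mono[rotated])
  also have "\<dots> = 2 * (g w)^2 - w^5 * (1 - w)"
    unfolding g_def by algebra
  also have "\<dots> < 2 * (g w)^2"
    using assms by simp
  finally show ?thesis .
next
  case False
  have "2*w - 3*w^2 \<le> 0"
    using False assms by (simp add: power2_eq_square algebra_simps)
  moreover have "4 * G w - 1/3 \<le> 4 * G w - x^3/3"
    using power_le_one[of x 3] assms by simp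
  ultimately have "(2*w - 3*w^2) * (4 * G w - x^3/3) \<le> (2*w - 3*w^2) * (4 * G w - 1/3)"
    by (rule mult_left_mono_neg[rotated])
  also have "\<dots> = 2 * (g w)^2 - w * (1 - w)^3 * (3*w^2 + 3*w + 2) / 3"
    unfolding g_def G_def by algebra
  also have "\<dots> < 2 * (g w)^2"
    using assms by (simp add: add_pos_pos)
  finally show ?thesis .
qed

definition G_drop :: "real \<Rightarrow> real \<Rightarrow> real \<Rightarrow> real" where
  "G_drop mu k x = (yk k x)^2 / (2*mu)"

definition xp_coeff :: "real \<Rightarrow> real \<Rightarrow> real" where
  "xp_coeff mu k = 3/4 + 3 * k^2 / (2*mu)"

(* (level_point mu k x s, s * yk k x) lies on the level line through (x, yk k x). *)
definition level_point :: "real \<Rightarrow> real \<Rightarrow> real \<Rightarrow> real \<Rightarrow> real" where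
  "level_point mu k x s = G_inv (G x - (1 - s^2) * G_drop mu k x)"

definition speed_fraction :: "real \<Rightarrow> real \<Rightarrow> real \<Rightarrow> real \<Rightarrow> real" where
  "speed_fraction mu k x u = sqrt ((yk k x)^2 + 2*mu*(G u - G x)) / (k * x^2)"

definition Tp_density :: "real \<Rightarrow> real \<Rightarrow> real \<Rightarrow> real \<Rightarrow> real" where
  "Tp_density mu k x s = k * x^2 / (mu * g (level_point mu k x s))"

lemma G_drop_eq: "G_drop mu k x = k^2 * x^4 / (2*mu)"
  by (simp add: G_drop_def yk_def power_mult_distrib)

lemma G_minus_G_drop: "mu \<noteq> 0 \<Longrightarrow> G x - G_drop mu k x = x^3/3 * (1 - xp_coeff mu k * x)"
  by (simp add: G_def G_drop_eq xp_coeff_def field_simps power_def)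

context
  fixes mu k :: real
  assumes mu_pos: "0 < mu" and k_pos: "0 < k"
begin

lemma xp_coeff_pos: "0 < xp_coeff mu k"
  unfolding xp_coeff_def using mu_pos by (simp add: add_pos_nonneg)

lemma xp_eq_min: "xp mu k = min 1 (1 / xp_coeff mu k)"
proof -
  have inv: "1 / xp_coeff mu k = 4*mu / (6*k^2 + 3*mu)"
    unfolding xp_coeff_def using mu_pos by (simp add: field_simps)
  have "1 \<le> 4*mu / (6*k^2 + 3*mu) \<longleftrightarrow> k^2 \<le> mu/6"
    using mu_pos by (simp add: add_nonneg_pos le_divide_eq mult.commute)
  then show ?thesis
    unfolding xp_def inv by (simp add: min_def)
qed

lemma xp_pos: "0 < xp mu k"
  using xp_coeff_pos by (simp add: xp_eq_min)

lemma below_xpD: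
  assumes "x \<in> {0<..<xp mu k}"
  shows "0 < x" "x < 1" "xp_coeff mu k * x < 1"
  using assms xp_coeff_pos by (auto simp: xp_eq_min field_simps)

lemma G_drop_pos: "0 < x \<Longrightarrow> 0 < G_drop mu k x"
  using mu_pos k_pos by (simp add: G_drop_eq)

lemma G_drop_less_G:
  assumes "x \<in> {0<..<xp mu k}"
  shows "G_drop mu k x < G x"
proof -
  have "0 < x^3/3 * (1 - xp_coeff mu k * x)"
    using below_xpD[OF assms] by simp
  then show ?thesis
    using G_minus_G_drop[of mu x k] mu_pos by simp
qed

lemma level_point_arg_mem:
  assumes x: "x \<in> {0<..<xp mu k}" and s: "s \<in> {0..1}"
  shows "G x - (1 - s^2) * G_drop mu k x \<in> {0<..<1/12}"
proof -
  have "0 \<le> 1 - s^2" "1 - s^2 \<le> 1"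
    using s by (auto simp: power_le_one)
  then have "0 \<le> (1 - s^2) * G_drop mu k x" "(1 - s^2) * G_drop mu k x \<le> G_drop mu k x"
    using G_drop_pos[of x] x by (auto simp: mult_left_le_one_le)
  moreover have "G x < 1/12"
    using G_less_iff[of x 1] below_xpD[OF x] by simp
  ultimately show ?thesis
    using G_drop_less_G[OF x] by simp
qed

lemma level_point_mem:
  "x \<in> {0<..<xp mu k} \<Longrightarrow> s \<in> {0..1} \<Longrightarrow> level_point mu k x s \<in> {0<..<1}"
  unfolding level_point_def by (intro G_inv_mem_open level_point_arg_mem)

lemma G_level_point:
  assumes "x \<in> {0<..<xp mu k}" "s \<in> {0..1}"
  shows "G (level_point mu k x s) = G x - (1 - s^2) * G_drop mu k x"
  unfolding level_point_def using level_point_arg_mem[OF assms] by (intro G_G_inv) auto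

lemma level_point_le:
  assumes x: "x \<in> {0<..<xp mu k}" and s: "s \<in> {0..1}"
  shows "level_point mu k x s \<le> x"
proof -
  have "0 \<le> (1 - s^2) * G_drop mu k x"
    using s G_drop_pos[of x] x by (simp add: power_le_one)
  then show ?thesis
    using G_le_iff[of "level_point mu k x s" x] G_level_point[OF x s] level_point_mem[OF x s]
      below_xpD[OF x]
    by simp
qed

lemma mx_eq_level_point:
  assumes x: "x \<in> {0<..<xp mu k}"
  shows "mx mu k x = level_point mu k x 0"
  unfolding mx_def
proof (rule the_equality)
  let ?m = "level_point mu k x 0"
  have m: "?m \<in> {0<..<1}" "G ?m = G x - G_drop mu k x"
    using level_point_mem[OF x] G_level_point[OF x] by auto
  have "?m < x"
    using G_less_iff[of ?m x] m G_drop_pos[of x] below_xpD[OF x] by simp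
  moreover have eq: "2*mu*G ?m = 2*mu*G x - (yk k x)^2"
    using m mu_pos by (simp add: G_drop_def field_simps)
  ultimately show "0 < ?m \<and> ?m < x \<and> 2*mu*G ?m = 2*mu*G x - (yk k x)^2"
    using m by simp
  fix m' assume m': "0 < m' \<and> m' < x \<and> 2*mu*G m' = 2*mu*G x - (yk k x)^2"
  then have "2*mu*G m' = 2*mu*G ?m"
    using eq by simp
  then have "G m' = G ?m"
    using mu_pos by simp
  then show "m' = ?m"
    using G_eq_iff[of m' ?m] m m' below_xpD[OF x] by simp
qed

lemma G_mx: "x \<in> {0<..<xp mu k} \<Longrightarrow> G (mx mu k x) = G x - G_drop mu k x"
  using G_level_point[of x 0] by (simp add: mx_eq_level_point)

lemma level_line_through_mx:
  "x \<in> {0<..<xp mu k} \<Longrightarrow> (yk k x)^2 + 2*mu*(G u - G x) = 2*mu*(G u - G (mx mu k x))"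
  using G_mx mu_pos by (simp add: G_drop_def field_simps)

lemma mx_mem: "x \<in> {0<..<xp mu k} \<Longrightarrow> mx mu k x \<in> {0<..<x}"
  using G_less_iff[of "mx mu k x" x] G_mx mx_eq_level_point level_point_mem[of x 0]
    G_drop_pos[of x] below_xpD[of x]
  by auto

lemma mx_le_level_point:
  assumes x: "x \<in> {0<..<xp mu k}" and s: "s \<in> {0..1}"
  shows "mx mu k x \<le> level_point mu k x s"
proof -
  have "(1 - s^2) * G_drop mu k x \<le> G_drop mu k x"
    using s G_drop_pos[of x] x by (simp add: mult_left_le_one_le)
  then show ?thesis
    using G_le_iff[of "mx mu k x" "level_point mu k x s"] G_mx[OF x] G_level_point[OF x s]
      level_point_mem[OF x s] mx_mem[OF x] below_xpD[OF x]
    by simp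
qed

lemma continuous_on_level_point:
  "continuous_on ({0<..<xp mu k} \<times> {0..1}) (\<lambda>(x, s). level_point mu k x s)"
proof -
  have "continuous_on ({0<..<xp mu k} \<times> {0..1}) (\<lambda>(x, s). G x - (1 - s^2) * G_drop mu k x)"
    unfolding G_def G_drop_eq case_prod_beta by (intro continuous_intros) (use mu_pos in auto)
  then show ?thesis
    unfolding level_point_def case_prod_beta
    by (rule continuous_on_compose2[OF continuous_on_G_inv]) (use level_point_arg_mem in force)
qed

lemma continuous_on_Tp_density:
  "continuous_on ({0<..<xp mu k} \<times> {0..1}) (\<lambda>(x, s). Tp_density mu k x s)"
proof -
  have "mu * ((level_point mu k x s)^2 * (1 - level_point mu k x s)) \<noteq> 0"
    if "x \<in> {0<..<xp mu k}" "s \<in> {0..1}" for x s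
    using level_point_mem[OF that] mu_pos by simp
  then show ?thesis
    unfolding Tp_density_def case_prod_beta g_def
    by (intro continuous_intros continuous_on_level_point[unfolded case_prod_beta])
      (auto simp: mem_Times_iff)
qed

lemma continuous_on_Tp_density_slice:
  assumes "x \<in> {0<..<xp mu k}"
  shows "continuous_on {0..1} (Tp_density mu k x)"
proof -
  have "continuous_on {0..1} (\<lambda>s. (\<lambda>(x, s). Tp_density mu k x s) (x, s))"
    by (rule continuous_on_compose2[OF continuous_on_Tp_density])
      (use assms in \<open>auto intro!: continuous_intros\<close>)
  then show ?thesis
    by simp
qed

lemma
  assumes x: "x \<in> {0<..<xp mu k}" and u: "u \<in> {mx mu k x..x}"
  shows speed_fraction_mem: "speed_fraction mu k x u \<in> {0..1}"
    and level_point_speed_fraction: "level_point mu k x (speed_fraction mu k x u) = u"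
proof -
  define R where "R = (yk k x)^2 + 2*mu*(G u - G x)"
  define s where "s = speed_fraction mu k x u"
  have u01: "u \<in> {0..1}"
    using u mx_mem[OF x] below_xpD[OF x] by auto
  have Gu: "G (mx mu k x) \<le> G u" "G u \<le> G x"
    using G_le_iff[of "mx mu k x" u] G_le_iff[of u x] u u01 mx_mem[OF x] below_xpD[OF x] by auto
  have R0: "0 \<le> R"
    using level_line_through_mx[OF x, of u] Gu mu_pos by (simp add: R_def)
  have R1: "R \<le> (k * x^2)^2"
    using Gu mu_pos by (simp add: R_def yk_def mult_le_0_iff)
  have kx: "0 < k * x^2"
    using k_pos below_xpD[OF x] by simp
  have "sqrt R \<le> k * x^2"
    using kx real_sqrt_le_mono[OF R1] by simp
  then show s: "speed_fraction mu k x u \<in> {0..1}"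
    using R0 kx by (simp add: speed_fraction_def R_def[symmetric])
  have "s^2 = R / (k * x^2)^2"
    using R0 by (simp add: s_def speed_fraction_def R_def[symmetric] power_divide)
  then have "(1 - s^2) * G_drop mu k x = ((k * x^2)^2 - R) / (2*mu)"
    using k_pos below_xpD[OF x] by (simp add: G_drop_def yk_def field_simps)
  then have "G (level_point mu k x s) = G u"
    using G_level_point[OF x s[folded s_def]] mu_pos by (simp add: R_def yk_def)
  then show "level_point mu k x (speed_fraction mu k x u) = u"
    using G_eq_iff[of "level_point mu k x s" u] level_point_mem[OF x s[folded s_def]] u01
    by (simp add: s_def)
qed

(* Substituting u = level_point mu k x s, i.e. s = speed_fraction mu k x u, the time element
   du / speed becomes Tp_density mu k x s ds. *)
lemma Tp_integrand_has_integral: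
  assumes x: "x \<in> {0<..<xp mu k}"
  shows "(Tp_integrand mu k x has_integral integral {0..1} (Tp_density mu k x)) {mx mu k x..x}"
proof -
  define M where "M = mx mu k x"
  define R where "R u = (yk k x)^2 + 2*mu*(G u - G x)" for u
  define S where "S = speed_fraction mu k x"
  define S' where "S' u = mu * g u / (k * x^2 * sqrt (R u))" for u
  have M: "0 < M" "M < x"
    using mx_mem[OF x] by (auto simp: M_def)
  have R_pos: "0 < R u" if "u \<in> {M<..<x}" for u
    using level_line_through_mx[OF x] G_less_iff[of M u] that M below_xpD[OF x] mu_pos
    by (simp add: R_def M_def)
  have S_M: "S M = 0"
    using level_line_through_mx[OF x] by (simp add: S_def speed_fraction_def M_def)
  have S_x: "S x = 1"
    using k_pos below_xpD[OF x] by (simp add: S_def speed_fraction_def yk_def)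
  have S_mem: "S ` {M..x} \<subseteq> {0..1}"
    using speed_fraction_mem[OF x] by (auto simp: S_def M_def)
  have S_cont: "continuous_on {M..x} S"
    unfolding S_def speed_fraction_def G_def using k_pos below_xpD[OF x]
    by (intro continuous_intros) auto
  have S_deriv: "(S has_real_derivative S' u) (at u within {M..x})" if "u \<in> {M..x} - {M, x}" for u
  proof -
    have "0 < R u"
      using R_pos that by auto
    then have "(S has_real_derivative S' u) (at u)"
      using k_pos below_xpD[OF x] unfolding S_def speed_fraction_def S'_def R_def
      by (auto intro!: derivative_eq_intros G_has_real_derivative simp: R_def[symmetric] field_simps)
    then show ?thesis
      by (rule has_field_derivative_at_within)
  qed
  have subst: "((\<lambda>u. S' u *\<^sub>R Tp_density mu k x (S u)) has_integral integral {0..1} (Tp_density mu k x))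
      {M..x}"
    using has_integral_substitution_strong[of "{M, x}", OF _ _ _ S_mem
        continuous_on_Tp_density_slice[OF x] S_cont S_deriv] M S_M S_x by simp
  show ?thesis
    unfolding M_def[symmetric]
  proof (rule has_integral_spike_finite[of "{M, x}", OF _ _ subst])
    fix u assume u: "u \<in> {M..x} - {M, x}"
    have "level_point mu k x (S u) = u"
      using level_point_speed_fraction[OF x] u by (simp add: S_def M_def)
    then show "Tp_integrand mu k x u = S' u *\<^sub>R Tp_density mu k x (S u)"
      using R_pos[of u] g_pos[of u] u M below_xpD[OF x] k_pos mu_pos
      by (simp add: Tp_integrand_def Tp_density_def S_def speed_fraction_def S'_def R_def[symmetric])
  qed simp
qed

lemma level_point_has_real_derivative:
  assumes x: "x \<in> {0<..<xp mu k}" and s: "s \<in> {0..1}"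
  shows "((\<lambda>x. level_point mu k x s) has_real_derivative
      (g x - (1 - s^2) * (2 * k^2 * x^3 / mu)) / g (level_point mu k x s)) (at x)"
proof -
  have "((\<lambda>x. G x - (1 - s^2) * G_drop mu k x) has_real_derivative
      g x - (1 - s^2) * (2 * k^2 * x^3 / mu)) (at x)"
    unfolding G_drop_eq using mu_pos
    by (auto intro!: derivative_eq_intros G_has_real_derivative simp: field_simps)
  from DERIV_chain2[OF G_inv_has_real_derivative[OF level_point_arg_mem[OF x s]] this]
  show ?thesis
    by (simp add: level_point_def divide_inverse mult.commute)
qed

lemma Tp_density_has_real_derivative:
  assumes x: "x \<in> {0<..<xp mu k}" and s: "s \<in> {0..1}"
  defines "V \<equiv> level_point mu k x s"
  shows "((\<lambda>x. Tp_density mu k x s) has_real_derivative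
      k * x * (2 * (g V)^2 - (2*V - 3*V^2) * (4 * G V - x^3/3)) / (mu * (g V)^3)) (at x)"
proof -
  define Z where "Z = g x - (1 - s^2) * (2 * k^2 * x^3 / mu)"
  have gV: "0 < g V"
    using g_pos level_point_mem[OF x s] by (auto simp: V_def)
  have xZ: "x * Z = 4 * G V - x^3/3"
    using G_level_point[OF x s] mu_pos
    by (simp add: Z_def V_def G_def G_drop_eq g_def field_simps power_def)
  have "((\<lambda>x. g (level_point mu k x s)) has_real_derivative (2*V - 3*V^2) * (Z / g V)) (at x)"
    using DERIV_chain2[OF g_has_real_derivative level_point_has_real_derivative[OF x s]]
    by (simp add: Z_def V_def)
  then have "((\<lambda>x. Tp_density mu k x s) has_real_derivative
      (k * (2*x) * (mu * g V) - k * x^2 * (mu * ((2*V - 3*V^2) * (Z / g V)))) / (mu * g V * (mu * g V)))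
      (at x)"
    unfolding Tp_density_def using gV mu_pos
    by (auto intro!: DERIV_quotient derivative_eq_intros simp: V_def)
  moreover have "(k * (2*x) * (mu * g V) - k * x^2 * (mu * ((2*V - 3*V^2) * (Z / g V))))
      / (mu * g V * (mu * g V)) = k * x * (2 * (g V)^2 - (2*V - 3*V^2) * (x * Z)) / (mu * (g V)^3)"
    using gV mu_pos by (simp add: field_simps power2_eq_square power3_eq_cube)
  ultimately show ?thesis
    by (simp add: xZ)
qed

lemma strict_mono_on_Tp_density:
  assumes s: "s \<in> {0..1}"
  shows "strict_mono_on {0<..<xp mu k} (\<lambda>x. Tp_density mu k x s)"
proof (rule strict_mono_onI)
  fix a b assume a: "a \<in> {0<..<xp mu k}" and b: "b \<in> {0<..<xp mu k}" and "a < b"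
  show "Tp_density mu k a s < Tp_density mu k b s"
  proof (rule DERIV_pos_imp_increasing[OF \<open>a < b\<close>])
    fix x assume "a \<le> x" "x \<le> b"
    then have x: "x \<in> {0<..<xp mu k}"
      using a b by auto
    define V where "V = level_point mu k x s"
    have V: "0 < V" "V \<le> x" "x < 1"
      using level_point_mem[OF x s] level_point_le[OF x s]
        below_xpD[OF x] by (auto simp: V_def)
    have "0 < k * x * (2 * (g V)^2 - (2*V - 3*V^2) * (4 * G V - x^3/3)) / (mu * (g V)^3)"
      using density_derivative_numerator_pos[OF V] g_pos[of V] V k_pos mu_pos by simp
    then show "\<exists>D. ((\<lambda>x. Tp_density mu k x s) has_real_derivative D) (at x) \<and> 0 < D"
      using Tp_density_has_real_derivative[OF x s] by (auto simp: V_def)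
  qed
qed

lemma Tp_eq_integral_Tp_density:
  "x \<in> {0<..<xp mu k} \<Longrightarrow> Tp mu k x = integral {0..1} (Tp_density mu k x)"
  unfolding Tp_def by (rule integral_unique[OF Tp_integrand_has_integral])

lemma continuous_on_Tp: "continuous_on {0<..<xp mu k} (Tp mu k)"
proof -
  have "continuous_on {0<..<xp mu k} (\<lambda>x. integral (cbox 0 1) (Tp_density mu k x))"
    by (rule integral_continuous_on_param)
      (use continuous_on_Tp_density in \<open>simp add: cbox_interval\<close>)
  then show ?thesis
    by (rule continuous_on_cong[THEN iffD1, rotated 2])
      (simp_all add: Tp_eq_integral_Tp_density cbox_interval)
qed

lemma strict_mono_on_Tp: "strict_mono_on {0<..<xp mu k} (Tp mu k)"
proof (rule strict_mono_onI)
  fix a b assume a: "a \<in> {0<..<xp mu k}" and b: "b \<in> {0<..<xp mu k}" and "a < b"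
  have "integral {0..1} (Tp_density mu k a) < integral {0..1} (Tp_density mu k b)"
    using continuous_on_Tp_density_slice a b
  proof (intro integral_less_real)
    show "Tp_density mu k a s < Tp_density mu k b s" if "s \<in> {0<..<1}" for s
      using strict_mono_onD[OF strict_mono_on_Tp_density a b \<open>a < b\<close>] that by simp
  qed auto
  then show "Tp mu k a < Tp mu k b"
    using a b by (simp add: Tp_eq_integral_Tp_density)
qed

lemma mx_ge:
  assumes x: "x \<in> {0<..<xp mu k}"
  shows "x * (1 - xp_coeff mu k * x) \<le> mx mu k x"
proof -
  define M where "M = mx mu k x"
  have M: "0 < M" "M < x"
    using mx_mem[OF x] by (auto simp: M_def)
  have "x^2 * (x * (1 - xp_coeff mu k * x)) = 3 * G M"
    using G_mx[OF x] G_minus_G_drop[of mu x k] mu_pos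
    by (simp add: M_def power2_eq_square power3_eq_cube)
  also have "\<dots> \<le> M^3"
    using G_le_cube[of M] M by simp
  also have "\<dots> \<le> x^2 * M"
    using mult_right_mono[OF power_mono[OF less_imp_le[OF M(2)], of 2], of M] M
    by (simp add: power2_eq_square power3_eq_cube mult.commute)
  finally show ?thesis
    using M by (simp add: M_def)
qed

lemma Tp_density_bounds:
  assumes x: "x \<in> {0<..<xp mu k}" and s: "s \<in> {0..1}"
  shows "k / mu \<le> Tp_density mu k x s"
    and "Tp_density mu k x s \<le> k / (mu * ((1 - xp_coeff mu k * x)^2 * (1 - x)))"
proof -
  define V where "V = level_point mu k x s"
  have V: "0 < V" "V < 1" "x * (1 - xp_coeff mu k * x) \<le> V" "V \<le> x"
    using level_point_mem[OF x s] level_point_le[OF x s]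
      mx_le_level_point[OF x s] mx_ge[OF x] by (auto simp: V_def)
  have x': "0 < x" "x < 1" "0 < 1 - xp_coeff mu k * x"
    using below_xpD[OF x] by auto
  have gV: "0 < g V"
    using g_pos V by simp
  have "g V \<le> V^2"
    using V mult_left_le_one_le[of "V^2" "1 - V"] by (simp add: g_def)
  also have "\<dots> \<le> x^2"
    using V by (simp add: power_mono)
  finally have "g V \<le> x^2" .
  then have "k * x^2 / (mu * x^2) \<le> k * x^2 / (mu * g V)"
    using gV mu_pos k_pos x' by (intro divide_left_mono mult_left_mono) auto
  then show "k / mu \<le> Tp_density mu k x s"
    using x' by (simp add: Tp_density_def V_def)
  have "(x * (1 - xp_coeff mu k * x))^2 * (1 - x) \<le> g V"
    unfolding g_def using V x' by (intro mult_mono power_mono) auto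
  then have "k * x^2 / (mu * g V) \<le> k * x^2 / (mu * ((x * (1 - xp_coeff mu k * x))^2 * (1 - x)))"
    using gV mu_pos k_pos x' by (intro divide_left_mono mult_left_mono mult_pos_pos) auto
  then show "Tp_density mu k x s \<le> k / (mu * ((1 - xp_coeff mu k * x)^2 * (1 - x)))"
    using x' by (simp add: Tp_density_def V_def power_mult_distrib)
qed

lemma Tp_bounds:
  assumes x: "x \<in> {0<..<xp mu k}"
  shows "k / mu \<le> Tp mu k x"
    and "Tp mu k x \<le> k / (mu * ((1 - xp_coeff mu k * x)^2 * (1 - x)))"
proof -
  have int: "Tp_density mu k x integrable_on {0..1}"
    by (rule integrable_continuous_real[OF continuous_on_Tp_density_slice[OF x]])
  show "k / mu \<le> Tp mu k x"
    using integral_le[OF integrable_const_ivl int Tp_density_bounds(1)[OF x]]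
    by (simp add: Tp_eq_integral_Tp_density[OF x])
  show "Tp mu k x \<le> k / (mu * ((1 - xp_coeff mu k * x)^2 * (1 - x)))"
    using integral_le[OF int integrable_const_ivl Tp_density_bounds(2)[OF x]]
    by (simp add: Tp_eq_integral_Tp_density[OF x])
qed

lemma Tp_tendsto_at_right_0: "(Tp mu k \<longlongrightarrow> k / mu) (at_right 0)"
proof (rule tendsto_sandwich)
  show "\<forall>\<^sub>F x in at_right 0. k / mu \<le> Tp mu k x"
    "\<forall>\<^sub>F x in at_right 0. Tp mu k x \<le> k / (mu * ((1 - xp_coeff mu k * x)^2 * (1 - x)))"
    using eventually_at_right_real[OF xp_pos] by (auto elim!: eventually_mono intro: Tp_bounds)
  have "((\<lambda>x. k / (mu * ((1 - xp_coeff mu k * x)^2 * (1 - x)))) \<longlongrightarrow>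
      k / (mu * ((1 - xp_coeff mu k * 0)^2 * (1 - 0)))) (at_right 0)"
    using mu_pos by (intro tendsto_intros) auto
  then show "((\<lambda>x. k / (mu * ((1 - xp_coeff mu k * x)^2 * (1 - x)))) \<longlongrightarrow> k / mu) (at_right 0)"
    by simp
qed simp

lemma Tp_integrand_ge:
  assumes x: "x \<in> {0<..<xp mu k}" and u: "u \<in> {mx mu k x<..<x}"
  shows "sqrt (3 / (2*mu)) / (u * sqrt u) \<le> Tp_integrand mu k x u"
proof -
  define M where "M = mx mu k x"
  define R where "R = (yk k x)^2 + 2*mu*(G u - G x)"
  have M: "0 < M" "M < u" "u < 1"
    using mx_mem[OF x] below_xpD[OF x] u by (auto simp: M_def)
  have "R = 2*mu*(G u - G M)"
    using level_line_through_mx[OF x] by (simp add: R_def M_def)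
  moreover have "0 \<le> G M"
    using G_ge_cube[of M] zero_le_power[of M 3] M by linarith
  moreover have "G M < G u" "G u \<le> u^3/3"
    using G_less_iff[of M u] G_le_cube[of u] M by auto
  ultimately have R: "0 < R" "R \<le> (2*mu/3) * (u^2 * u)"
    using mu_pos by (auto simp: power2_eq_square power3_eq_cube)
  have "sqrt ((2*mu/3) * (u^2 * u)) = sqrt (2*mu/3) * (u * sqrt u)"
    unfolding real_sqrt_mult real_sqrt_abs using M by simp
  then have "sqrt R \<le> sqrt (2*mu/3) * (u * sqrt u)"
    using real_sqrt_le_mono[OF R(2)] by simp
  then have "1 / (sqrt (2*mu/3) * (u * sqrt u)) \<le> 1 / sqrt R"
    using R M mu_pos by (intro divide_left_mono) auto
  then show ?thesis
    by (simp add: Tp_integrand_def R_def real_sqrt_divide)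
qed

lemma Tp_ge_inverse_sqrt_mx:
  assumes x: "x \<in> {0<..<xp mu k}"
  shows "2 * sqrt (3 / (2*mu)) * (1 / sqrt (mx mu k x) - 1 / sqrt x) \<le> Tp mu k x"
proof -
  define M where "M = mx mu k x"
  define c where "c = sqrt (3 / (2*mu))"
  have M: "0 < M" "M < x"
    using mx_mem[OF x] by (auto simp: M_def)
  have "((\<lambda>u. c / (u * sqrt u)) has_integral (- 2 * c / sqrt x) - (- 2 * c / sqrt M)) {M<..<x}"
    unfolding has_integral_Icc_iff_Ioo[symmetric]
  proof (rule fundamental_theorem_of_calculus)
    fix u assume "u \<in> {M..x}"
    then have "0 < u"
      using M by auto
    then have "((\<lambda>u. - 2 * c / sqrt u) has_real_derivative c / (u * sqrt u)) (at u)"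
      by (auto intro!: derivative_eq_intros simp: field_simps)
    then show "((\<lambda>u. - 2 * c / sqrt u) has_vector_derivative c / (u * sqrt u)) (at u within {M..x})"
      by (simp add: has_real_derivative_iff_has_vector_derivative has_vector_derivative_at_within)
  qed (use M in simp)
  moreover have "(Tp_integrand mu k x has_integral Tp mu k x) {M<..<x}"
    using Tp_integrand_has_integral[OF x]
    by (simp add: has_integral_Icc_iff_Ioo M_def Tp_eq_integral_Tp_density[OF x])
  moreover have "c / (u * sqrt u) \<le> Tp_integrand mu k x u" if "u \<in> {M<..<x}" for u
    using Tp_integrand_ge[OF x] that by (simp add: c_def M_def)
  ultimately have "(- 2 * c / sqrt x) - (- 2 * c / sqrt M) \<le> Tp mu k x"
    by (rule has_integral_le)
  then show ?thesis
    by (simp add: c_def M_def algebra_simps)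
qed

lemma mx_tendsto_at_left_xp:
  assumes "xp mu k < 1"
  shows "(mx mu k \<longlongrightarrow> 0) (at_left (xp mu k))"
proof (rule tendsto_sandwich)
  define P where "P x = root 3 (4 * x^3 * (1 - xp_coeff mu k * x))" for x
  have ev: "\<forall>\<^sub>F x in at_left (xp mu k). x \<in> {0<..<xp mu k}"
    by (rule eventually_at_left_real[OF xp_pos])
  have "mx mu k x \<le> P x" if x: "x \<in> {0<..<xp mu k}" for x
  proof -
    have "(mx mu k x)^3 \<le> 12 * G (mx mu k x)"
      using G_ge_cube[of "mx mu k x"] mx_mem[OF x] below_xpD[OF x] by auto
    also have "\<dots> = 4 * x^3 * (1 - xp_coeff mu k * x)"
      using G_mx[OF x] G_minus_G_drop[of mu x k] mu_pos by simp
    finally show ?thesis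
      unfolding P_def using real_root_le_mono[of 3] mx_mem[OF x]
      by (metis less_imp_le real_root_power_cancel zero_less_numeral greaterThanLessThan_iff)
  qed
  then show "\<forall>\<^sub>F x in at_left (xp mu k). mx mu k x \<le> P x"
    using ev by (auto elim!: eventually_mono)
  show "\<forall>\<^sub>F x in at_left (xp mu k). 0 \<le> mx mu k x"
    using ev by (rule eventually_mono) (use mx_mem in force)
  have "xp_coeff mu k * xp mu k = 1"
    using assms xp_coeff_pos by (auto simp: xp_eq_min min_def split: if_splits)
  then have "P (xp mu k) = 0"
    by (simp add: P_def)
  moreover have "(P \<longlongrightarrow> P (xp mu k)) (at_left (xp mu k))"
    unfolding P_def by (intro tendsto_intros)
  ultimately show "(P \<longlongrightarrow> 0) (at_left (xp mu k))"
    by simp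
qed simp

lemma Tp_tendsto_at_top_at_left_xp:
  assumes "xp mu k < 1"
  shows "filterlim (Tp mu k) at_top (at_left (xp mu k))"
proof (rule filterlim_at_top_mono)
  let ?F = "at_left (xp mu k)"
  have ev: "\<forall>\<^sub>F x in ?F. x \<in> {0<..<xp mu k}"
    by (rule eventually_at_left_real[OF xp_pos])
  then show "\<forall>\<^sub>F x in ?F. 2 * sqrt (3 / (2*mu)) * (1 / sqrt (mx mu k x) - 1 / sqrt x) \<le> Tp mu k x"
    by (auto elim!: eventually_mono intro: Tp_ge_inverse_sqrt_mx)
  have "filterlim (\<lambda>x. sqrt (mx mu k x)) (at_right 0) ?F"
  proof (rule tendsto_imp_filterlim_at_right)
    show "((\<lambda>x. sqrt (mx mu k x)) \<longlongrightarrow> 0) ?F"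
      using tendsto_real_sqrt[OF mx_tendsto_at_left_xp[OF assms]] by simp
    show "\<forall>\<^sub>F x in ?F. 0 < sqrt (mx mu k x)"
      using ev by (rule eventually_mono) (use mx_mem in force)
  qed
  then have "filterlim (\<lambda>x. 1 / sqrt (mx mu k x)) at_top ?F"
    unfolding inverse_eq_divide[symmetric] by (rule filterlim_compose[OF filterlim_inverse_at_top_right])
  moreover have "((\<lambda>x. - (1 / sqrt x)) \<longlongrightarrow> - (1 / sqrt (xp mu k))) ?F"
    by (intro tendsto_intros) (use xp_pos in auto)
  ultimately have "filterlim (\<lambda>x. - (1 / sqrt x) + 1 / sqrt (mx mu k x)) at_top ?F"
    by (rule filterlim_tendsto_add_at_top[rotated])
  then show "filterlim (\<lambda>x. 2 * sqrt (3 / (2*mu)) * (1 / sqrt (mx mu k x) - 1 / sqrt x)) at_top ?F"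
    using mu_pos
    by (intro filterlim_tendsto_pos_mult_at_top[OF tendsto_const]) (auto simp: algebra_simps)
qed

end

theorem proposition3p1:
  fixes mu k :: real
  assumes "mu > 0" and "k > 0"
  shows "(\<forall>x\<in>{0<..<xp mu k}. Tp_integrand mu k x integrable_on {mx mu k x..x} \<and> Tp mu k x > 0)
    \<and> continuous_on {0<..<xp mu k} (Tp mu k)
    \<and> strict_mono_on {0<..<xp mu k} (Tp mu k)
    \<and> (Tp mu k \<longlongrightarrow> k / mu) (at_right 0)
    \<and> (xp mu k < 1 \<longrightarrow> filterlim (Tp mu k) at_top (at_left (xp mu k)))"
proof -
  have "Tp_integrand mu k x integrable_on {mx mu k x..x} \<and> Tp mu k x > 0"
    if "x \<in> {0<..<xp mu k}" for x
    using Tp_integrand_has_integral[OF assms that] Tp_bounds(1)[OF assms that] assms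
    by (auto intro: less_le_trans[of 0 "k / mu"])
  then show ?thesis
    using continuous_on_Tp[OF assms] strict_mono_on_Tp[OF assms]
      Tp_tendsto_at_right_0[OF assms] Tp_tendsto_at_top_at_left_xp[OF assms]
    by blast
qed

end
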